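(* Let the data $A^\pm$, $C$, $\mu^\pm$ satisfy the standing assumptions below and let $x\in S\cap\mathbb{R}^n$. Then $x$ is a local optimum if and only if, for every $\mathcal{H}\in\mathfrak{G}(x)$, the minimum capacity of an $s$-$t$ cut in $\mathcal{H}$ equals $D$. Moreover, if $x$ is not a local optimum, then for some $\mathcal{H}\in\mathfrak{G}(x)$ there is a minimum $s$-$t$ cut $(X,Y)$ ($s\in X$, $t\in Y$) with capacity less than $D$, and $J=Y\cap[n]$ is a feasible descent direction at $x$, i.e. $x+\delta\chi_J\in S$ and $f(x+\delta\chi_J)<f(x)$ for all $0<\delta<\epsilon(x)$.
   Context: $\mathbb{R}_{\max}=\mathbb{R}\cup\{-\infty\}$, $[n]=\{1,\dots,n\}$, $\chi_J$ is the indicator vector of $J$. Data: $A^\pm=(a^\pm_{i,j})\in\mathbb{R}_{\max}^{m\times n}$, $C=(c_{k,j})\in\mathbb{R}_{\max}^{p\times n}$, $\mu^+\in\mathbb{Z}_{\ge0}^p$, $\mu^-\in\mathbb{Z}_{\ge0}^n$; $A=(a_{i,j})$ with $a_{i,j}=\max(a^+_{i,j},a^-_{i,j})$. Objective $f(x)=\sum_k\mu^+_k\max_j(c_{k,j}+x_j)-\sum_j\mu^-_jx_j$; feasible set $S=\{x:\max_j(a^+_{i,j}+x_j)\ge\max_j(a^-_{i,j}+x_j)\ \forall i\in[m]\}$. Standing assumptions: every row of $A$ and of $C$ has a finite entry; $\sum_k\mu^+_k=\sum_j\mu^-_j=:D$; the undirected graph on $\{u_1,\dots,u_p\}\cup[n]\cup\{w_1,\dots,w_m\}$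 with edges $\{u_k,j\}$ ($c_{k,j}\ne-\infty$) and $\{w_i,j\}$ ($a_{i,j}\ne-\infty$) is connected. A point $x\in S\cap\mathbb{R}^n$ is a local optimum if there is $\delta>0$ with $f(y)\ge f(x)$ for all $y\in S\cap\mathbb{R}^n$ with $\max_j|x_j-y_j|<\delta$. Let $\epsilon(x)$ be the smallest positive value among the numbers $|(a_{i,j_1}+x_{j_1})-(a_{i,j_2}+x_{j_2})|$ and $|(c_{k,j_1}+x_{j_1})-(c_{k,j_2}+x_{j_2})|$ over $i,k,j_1,j_2$. Tangent digraph $\mathcal{G}(x)$: vertices $U=\{u_1,\dots,u_p\}$, $V=[n]$, $W=\{w_1,\dots,w_m\}$; edges $E_1(x)=\{(u_k,j):\max_{j'}(c_{k,j'}+x_{j'})=c_{k,j}+x_j\}$, $E_2(x)=\{(w_i,j):\max_{j'}(a_{i,j'}+x_{j'})=a^-_{i,j}+x_j\}$, $E_3(x)=\{(j,w_i):\max_{j'}(a_{i,j'}+x_{j'})=a^+_{i,j}+x_j\}$. The extended digraph $\overline{\mathcal{G}}(x)$ adds vertices $s,t$ and edges $(s,u_k)$ of capacity $\mu^+_k$ ($k\in[p]$) and $(j,t)$ of capacity $\mu^-_j$ ($j\in[n]$); every edge of $E_1(x)\cup E_2(x)\cup E_3(x)$ has capacity $D$. $\mathfrak{G}(x)$ is the set of subgraphs of $\overline{\mathcal{G}}(x)$ obtained by deleting edges of $E_3(x)$ so that each $w_i$ has exactly one incoming edge. The capacity of an $s$-$t$ cut $(X,Y)$ is the total capacity of edges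 from $X$ to $Y$. *)

theory Defs
  imports "HOL-Library.Extended_Real"
begin

text \<open>Entries of R_max are modelled as extended reals different from plus infinity.
Indices range over {..<n}, {..<m}, {..<p} (0-based).\<close>

definition amax :: "(nat \<Rightarrow> nat \<Rightarrow> ereal) \<Rightarrow> (nat \<Rightarrow> nat \<Rightarrow> ereal) \<Rightarrow> nat \<Rightarrow> nat \<Rightarrow> ereal" where
  "amax Ap Am i j = max (Ap i j) (Am i j)"

definition rowmax :: "nat \<Rightarrow> (nat \<Rightarrow> nat \<Rightarrow> ereal) \<Rightarrow> nat \<Rightarrow> (nat \<Rightarrow> real) \<Rightarrow> ereal" where
  "rowmax n M i x = (SUP j\<in>{..<n}. M i j + ereal (x j))"

definition feasible :: "nat \<Rightarrow> nat \<Rightarrow> (nat \<Rightarrow> nat \<Rightarrow> ereal) \<Rightarrow> (nat \<Rightarrow> nat \<Rightarrow> ereal) \<Rightarrow> (nat \<Rightarrow> real) \<Rightarrow> bool" where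
  "feasible m n Ap Am x \<longleftrightarrow> (\<forall>i<m. rowmax n Ap i x \<ge> rowmax n Am i x)"

definition fobj :: "nat \<Rightarrow> nat \<Rightarrow> (nat \<Rightarrow> nat \<Rightarrow> ereal) \<Rightarrow> (nat \<Rightarrow> nat) \<Rightarrow> (nat \<Rightarrow> nat) \<Rightarrow> (nat \<Rightarrow> real) \<Rightarrow> real" where
  "fobj p n C mup mum x =
     (\<Sum>k<p. real (mup k) * real_of_ereal (rowmax n C k x)) - (\<Sum>j<n. real (mum j) * x j)"

definition local_opt :: "nat \<Rightarrow> nat \<Rightarrow> nat \<Rightarrow> (nat \<Rightarrow> nat \<Rightarrow> ereal) \<Rightarrow> (nat \<Rightarrow> nat \<Rightarrow> ereal) \<Rightarrow>
    (nat \<Rightarrow> nat \<Rightarrow> ereal) \<Rightarrow> (nat \<Rightarrow> nat) \<Rightarrow> (nat \<Rightarrow> nat) \<Rightarrow> (nat \<Rightarrow> real) \<Rightarrow> bool" where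
  "local_opt m n p Ap Am C mup mum x \<longleftrightarrow>
     feasible m n Ap Am x \<and>
     (\<exists>\<delta>>0. \<forall>y. feasible m n Ap Am y \<and> (\<forall>j<n. \<bar>x j - y j\<bar> < \<delta>)
                \<longrightarrow> fobj p n C mup mum y \<ge> fobj p n C mup mum x)"

text \<open>epsilon(x): smallest positive value among the (finite) differences; Inf {} = \<infinity>.\<close>
definition eps :: "nat \<Rightarrow> nat \<Rightarrow> nat \<Rightarrow> (nat \<Rightarrow> nat \<Rightarrow> ereal) \<Rightarrow> (nat \<Rightarrow> nat \<Rightarrow> ereal) \<Rightarrow>
    (nat \<Rightarrow> nat \<Rightarrow> ereal) \<Rightarrow> (nat \<Rightarrow> real) \<Rightarrow> ereal" where
  "eps m n p Ap Am C x = Inf ({e. e > 0} \<inter>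
     ({ereal \<bar>(real_of_ereal (amax Ap Am i j1) + x j1) - (real_of_ereal (amax Ap Am i j2) + x j2)\<bar> | i j1 j2.
         i < m \<and> j1 < n \<and> j2 < n \<and> amax Ap Am i j1 \<noteq> -\<infinity> \<and> amax Ap Am i j2 \<noteq> -\<infinity>} \<union>
      {ereal \<bar>(real_of_ereal (C k j1) + x j1) - (real_of_ereal (C k j2) + x j2)\<bar> | k j1 j2.
         k < p \<and> j1 < n \<and> j2 < n \<and> C k j1 \<noteq> -\<infinity> \<and> C k j2 \<noteq> -\<infinity>}))"

datatype vtx = Src | Snk | Uv nat | Vv nat | Wv nat

definition verts :: "nat \<Rightarrow> nat \<Rightarrow> nat \<Rightarrow> vtx set" where
  "verts m n p = {Src, Snk} \<union> Uv ` {..<p} \<union> Vv ` {..<n} \<union> Wv ` {..<m}"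

definition undir_edges :: "nat \<Rightarrow> nat \<Rightarrow> nat \<Rightarrow> (nat \<Rightarrow> nat \<Rightarrow> ereal) \<Rightarrow> (nat \<Rightarrow> nat \<Rightarrow> ereal) \<Rightarrow>
    (nat \<Rightarrow> nat \<Rightarrow> ereal) \<Rightarrow> (vtx \<times> vtx) set" where
  "undir_edges m n p Ap Am C =
     {(Uv k, Vv j) | k j. k < p \<and> j < n \<and> C k j \<noteq> -\<infinity>} \<union>
     {(Vv j, Uv k) | k j. k < p \<and> j < n \<and> C k j \<noteq> -\<infinity>} \<union>
     {(Wv i, Vv j) | i j. i < m \<and> j < n \<and> amax Ap Am i j \<noteq> -\<infinity>} \<union>
     {(Vv j, Wv i) | i j. i < m \<and> j < n \<and> amax Ap Am i j \<noteq> -\<infinity>}"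

definition graph_connected :: "nat \<Rightarrow> nat \<Rightarrow> nat \<Rightarrow> (nat \<Rightarrow> nat \<Rightarrow> ereal) \<Rightarrow> (nat \<Rightarrow> nat \<Rightarrow> ereal) \<Rightarrow>
    (nat \<Rightarrow> nat \<Rightarrow> ereal) \<Rightarrow> bool" where
  "graph_connected m n p Ap Am C \<longleftrightarrow>
     (\<forall>a\<in>verts m n p - {Src, Snk}. \<forall>b\<in>verts m n p - {Src, Snk}.
        (a, b) \<in> (undir_edges m n p Ap Am C)\<^sup>*)"

definition E1 :: "nat \<Rightarrow> nat \<Rightarrow> (nat \<Rightarrow> nat \<Rightarrow> ereal) \<Rightarrow> (nat \<Rightarrow> real) \<Rightarrow> (vtx \<times> vtx) set" where
  "E1 n p C x = {(Uv k, Vv j) | k j. k < p \<and> j < n \<and> rowmax n C k x = C k j + ereal (x j)}"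

definition E2 :: "nat \<Rightarrow> nat \<Rightarrow> (nat \<Rightarrow> nat \<Rightarrow> ereal) \<Rightarrow> (nat \<Rightarrow> nat \<Rightarrow> ereal) \<Rightarrow> (nat \<Rightarrow> real) \<Rightarrow> (vtx \<times> vtx) set" where
  "E2 m n Ap Am x = {(Wv i, Vv j) | i j. i < m \<and> j < n \<and> rowmax n (amax Ap Am) i x = Am i j + ereal (x j)}"

definition E3 :: "nat \<Rightarrow> nat \<Rightarrow> (nat \<Rightarrow> nat \<Rightarrow> ereal) \<Rightarrow> (nat \<Rightarrow> nat \<Rightarrow> ereal) \<Rightarrow> (nat \<Rightarrow> real) \<Rightarrow> (vtx \<times> vtx) set" where
  "E3 m n Ap Am x = {(Vv j, Wv i) | i j. i < m \<and> j < n \<and> rowmax n (amax Ap Am) i x = Ap i j + ereal (x j)}"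

definition Eext :: "nat \<Rightarrow> nat \<Rightarrow> nat \<Rightarrow> (nat \<Rightarrow> nat \<Rightarrow> ereal) \<Rightarrow> (nat \<Rightarrow> nat \<Rightarrow> ereal) \<Rightarrow>
    (nat \<Rightarrow> nat \<Rightarrow> ereal) \<Rightarrow> (nat \<Rightarrow> real) \<Rightarrow> (vtx \<times> vtx) set" where
  "Eext m n p Ap Am C x = E1 n p C x \<union> E2 m n Ap Am x \<union> E3 m n Ap Am x \<union>
     {(Src, Uv k) | k. k < p} \<union> {(Vv j, Snk) | j. j < n}"

fun cap :: "(nat \<Rightarrow> nat) \<Rightarrow> (nat \<Rightarrow> nat) \<Rightarrow> nat \<Rightarrow> vtx \<times> vtx \<Rightarrow> nat" where
  "cap mup mum D (Src, Uv k) = mup k"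
| "cap mup mum D (Vv j, Snk) = mum j"
| "cap mup mum D _ = D"

text \<open>The family frak-G(x): subgraphs (given by edge sets) obtained by deleting edges of E3
  so that every w_i has exactly one incoming edge.\<close>
definition subgraphs :: "nat \<Rightarrow> nat \<Rightarrow> nat \<Rightarrow> (nat \<Rightarrow> nat \<Rightarrow> ereal) \<Rightarrow> (nat \<Rightarrow> nat \<Rightarrow> ereal) \<Rightarrow>
    (nat \<Rightarrow> nat \<Rightarrow> ereal) \<Rightarrow> (nat \<Rightarrow> real) \<Rightarrow> (vtx \<times> vtx) set set" where
  "subgraphs m n p Ap Am C x = {H. Eext m n p Ap Am C x - E3 m n Ap Am x \<subseteq> H \<and> H \<subseteq> Eext m n p Ap Am C x \<and>
       (\<forall>i<m. card {v. (v, Wv i) \<in> H} = 1)}"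

text \<open>s-t cuts (X, verts - X) with Src in X, Snk not in X.\<close>
definition st_cuts :: "nat \<Rightarrow> nat \<Rightarrow> nat \<Rightarrow> vtx set set" where
  "st_cuts m n p = {X. X \<subseteq> verts m n p \<and> Src \<in> X \<and> Snk \<notin> X}"

definition cut_cap :: "(nat \<Rightarrow> nat) \<Rightarrow> (nat \<Rightarrow> nat) \<Rightarrow> nat \<Rightarrow> (vtx \<times> vtx) set \<Rightarrow> vtx set \<Rightarrow> nat" where
  "cut_cap mup mum D H X = (\<Sum>e\<in>{e\<in>H. fst e \<in> X \<and> snd e \<notin> X}. cap mup mum D e)"

definition min_cut :: "nat \<Rightarrow> nat \<Rightarrow> nat \<Rightarrow> (nat \<Rightarrow> nat) \<Rightarrow> (nat \<Rightarrow> nat) \<Rightarrow> nat \<Rightarrow> (vtx \<times> vtx) set \<Rightarrow> nat" where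
  "min_cut m n p mup mum D H = Min (cut_cap mup mum D H ` st_cuts m n p)"

end

theory Submission
  imports Defs
begin

(*
  For a perturbation y = x + d whose spread max d - min d stays below epsilon(x), no two entries of
  a row change their order, so each row maximum moves by the largest increment of d over the indices
  where it is attained. Hence f(y) - f(x) = sum_k mu+_k max_{S_k} d - sum_j mu-_j d_j, with S_k the
  maximisers of row k of C, and row i stays feasible iff the largest increment over the maximisers
  of row i of A is attained at a maximiser that comes from A+.

  If some H has an s-t cut (X, Y) of capacity < D, no edge of capacity D crosses it. Raising the
  coordinates in J = Y \<inter> [n] by delta therefore keeps every row feasible (the in-edge of w_i is the
  witness) and changes f by at most delta (capacity - D) < 0.

  Conversely, if a nearby feasible y improves f, a layer-cake decomposition of d = y - x shows that
  one superlevel set J of d has mu+{k. S_k meets J} < mu-(J). Feasibility of y makes J closed along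
  the tangent edges, and taking the in-edge of each w_i from J whenever possible yields a subgraph
  with a cut of capacity < D.
*)

section \<open>Row maxima under small perturbations\<close>

lemma rowmax_upper: "j < n \<Longrightarrow> M i j + ereal (x j) \<le> rowmax n M i x"
  unfolding rowmax_def by (rule SUP_upper) auto

lemma rowmax_least: "(\<And>j. j < n \<Longrightarrow> M i j + ereal (x j) \<le> b) \<Longrightarrow> rowmax n M i x \<le> b"
  unfolding rowmax_def by (rule SUP_least) auto

lemma rowmax_attained:
  assumes "0 < n"
  obtains j where "j < n" "rowmax n M i x = M i j + ereal (x j)"
proof -
  have "Sup ((\<lambda>j. M i j + ereal (x j)) ` {..<n}) \<in> (\<lambda>j. M i j + ereal (x j)) ` {..<n}"
    by (rule finite_Sup_in) (use assms in \<open>auto simp: sup_max max_def\<close>)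
  then show thesis using that unfolding rowmax_def by auto
qed

lemma max_plus_ereal: "max a b + ereal c = max (a + ereal c) (b + ereal c)"
  by (cases a; cases b) (simp_all add: max_def)

lemma rowmax_amax: "rowmax n (amax Ap Am) i x = max (rowmax n Ap i x) (rowmax n Am i x)"
proof -
  have "rowmax n (amax Ap Am) i x = (SUP j\<in>{..<n}. max (Ap i j + ereal (x j)) (Am i j + ereal (x j)))"
    unfolding rowmax_def amax_def by (simp add: max_plus_ereal)
  also have "\<dots> = max (rowmax n Ap i x) (rowmax n Am i x)"
    unfolding rowmax_def sup_max[symmetric] by (rule Complete_Lattices.SUP_sup_distrib[symmetric])
  finally show ?thesis .
qed

lemma rowmax_finite:
  assumes "\<forall>j<n. M i j \<noteq> \<infinity>" and "\<exists>j<n. M i j \<noteq> -\<infinity>"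
  obtains r where "rowmax n M i x = ereal r"
proof -
  obtain j where j: "j < n" "M i j \<noteq> -\<infinity>" using assms(2) by blast
  obtain j0 where j0: "j0 < n" "rowmax n M i x = M i j0 + ereal (x j0)"
    using rowmax_attained[of n M i x] j(1) by auto
  have "rowmax n M i x \<noteq> \<infinity>" using j0 assms(1) by auto
  moreover have "rowmax n M i x \<noteq> -\<infinity>"
    using rowmax_upper[OF j(1), of M i x] j(2) by auto
  ultimately show thesis using that by (cases "rowmax n M i x") auto
qed

(* The tangent edges in terms of active sets, with AM = amax Ap Am:
   (u_k, j) \<in> E1 iff j \<in> active n C C k x, (w_i, j) \<in> E2 iff j \<in> active n AM Am i x,
   and (j, w_i) \<in> E3 iff j \<in> active n AM Ap i x. *)
definition active :: "nat \<Rightarrow> (nat \<Rightarrow> nat \<Rightarrow> ereal) \<Rightarrow> (nat \<Rightarrow> nat \<Rightarrow> ereal) \<Rightarrow> nat \<Rightarrow> (nat \<Rightarrow> real) \<Rightarrow> nat set"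
  where "active n M N i x = {j. j < n \<and> rowmax n M i x = N i j + ereal (x j)}"

definition preserves_order :: "nat \<Rightarrow> (nat \<Rightarrow> nat \<Rightarrow> ereal) \<Rightarrow> nat \<Rightarrow> (nat \<Rightarrow> real) \<Rightarrow> (nat \<Rightarrow> real) \<Rightarrow> bool"
  where "preserves_order n M i x y \<longleftrightarrow>
    (\<forall>j1<n. \<forall>j2<n. M i j1 + ereal (x j1) < M i j2 + ereal (x j2) \<longrightarrow>
                    M i j1 + ereal (y j1) < M i j2 + ereal (y j2))"

lemma finite_active [simp]: "finite (active n M N i x)"
  unfolding active_def by simp

lemma active_nonempty:
  assumes "rowmax n M i x = ereal r"
  shows "active n M M i x \<noteq> {}"
proof -
  have "0 < n"
    using assms by (cases n) (auto simp: rowmax_def bot_ereal_def)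
  then obtain j where "j < n" "rowmax n M i x = M i j + ereal (x j)"
    by (rule rowmax_attained)
  then show ?thesis unfolding active_def by blast
qed

lemma active_shift:
  assumes "j \<in> active n M N i x" and "rowmax n M i x = ereal r"
  shows "N i j + ereal (y j) = ereal (r + (y j - x j))"
proof -
  have "N i j + ereal (y j) = (N i j + ereal (x j)) + ereal (y j - x j)" by (simp add: add.assoc)
  moreover have "N i j + ereal (x j) = ereal r" using assms unfolding active_def by simp
  ultimately show ?thesis by simp
qed

lemma rowmax_perturb:
  assumes r: "rowmax n M i x = ereal r" and ord: "preserves_order n M i x y"
  shows "rowmax n M i y = ereal (r + Max ((\<lambda>j. y j - x j) ` active n M M i x))"
proof -
  define d where "d j = y j - x j" for j
  define T where "T = active n M M i x"
  have T_ne: "T \<noteq> {}" using active_nonempty[OF r] unfolding T_def .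
  have "Max (d ` T) \<in> d ` T" using T_ne by (simp add: T_def)
  then obtain js where js: "js \<in> T" "d js = Max (d ` T)" by (metis imageE)
  have on_T: "M i j + ereal (y j) = ereal (r + d j)" if "j \<in> T" for j
    using active_shift[OF that[unfolded T_def] r] unfolding d_def .
  show ?thesis
    unfolding d_def[symmetric] T_def[symmetric]
  proof (rule antisym)
    show "rowmax n M i y \<le> ereal (r + Max (d ` T))"
    proof (rule rowmax_least)
      fix j assume j: "j < n"
      show "M i j + ereal (y j) \<le> ereal (r + Max (d ` T))"
      proof (cases "j \<in> T")
        case True
        then show ?thesis using on_T[of j] by (simp add: T_def)
      next
        case False
        have js_n: "js < n" and "M i js + ereal (x js) = ereal r"
          using js(1) r unfolding T_def active_def by auto
        moreover have "M i j + ereal (x j) \<le> ereal r" using rowmax_upper[OF j, of M i x] r by simp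
        ultimately have "M i j + ereal (x j) < M i js + ereal (x js)"
          using False j r unfolding T_def active_def by auto
        then have "M i j + ereal (y j) < M i js + ereal (y js)"
          using ord j js_n unfolding preserves_order_def by blast
        then show ?thesis using on_T[OF js(1)] js(2) by simp
      qed
    qed
    show "ereal (r + Max (d ` T)) \<le> rowmax n M i y"
      using rowmax_upper[of js n M i y] on_T[OF js(1)] js unfolding T_def active_def by simp
  qed
qed

lemma active_amax:
  "active n (amax Ap Am) (amax Ap Am) i x = active n (amax Ap Am) Ap i x \<union> active n (amax Ap Am) Am i x"
proof -
  have split: "amax Ap Am i j + ereal (x j) = max (Ap i j + ereal (x j)) (Am i j + ereal (x j))" for j
    by (simp add: amax_def max_plus_ereal)
  have "Ap i j + ereal (x j) \<le> rowmax n (amax Ap Am) i x" "Am i j + ereal (x j) \<le> rowmax n (amax Ap Am) i x"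
    if "j < n" for j
    using rowmax_upper[OF that, of "amax Ap Am" i x] by (auto simp: split)
  then show ?thesis
    unfolding active_def split by (auto simp: max_def intro: antisym)
qed

lemma active_plus_subset: "active n (amax Ap Am) Ap i x \<subseteq> active n (amax Ap Am) (amax Ap Am) i x"
  using active_amax by blast

lemma row_feasible_if_max_shift_on_plus:
  assumes r: "rowmax n (amax Ap Am) i x = ereal r" and ord: "preserves_order n (amax Ap Am) i x y"
    and j: "j \<in> active n (amax Ap Am) Ap i x"
    and top: "\<forall>j'\<in>active n (amax Ap Am) (amax Ap Am) i x. y j' - x j' \<le> y j - x j"
  shows "rowmax n Am i y \<le> rowmax n Ap i y"
proof -
  have "Max ((\<lambda>j. y j - x j) ` active n (amax Ap Am) (amax Ap Am) i x) = y j - x j"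
    using j top active_plus_subset[of n Ap Am i x] by (intro Max_eqI) auto
  then have "rowmax n (amax Ap Am) i y = ereal (r + (y j - x j))"
    using rowmax_perturb[OF r ord] by simp
  also have "\<dots> = Ap i j + ereal (y j)"
    using active_shift[OF j r] by simp
  finally have "rowmax n (amax Ap Am) i y \<le> rowmax n Ap i y"
    using j unfolding active_def by (simp add: rowmax_upper)
  then show ?thesis by (simp add: rowmax_amax)
qed

lemma max_shift_on_plus_if_row_feasible:
  assumes r: "rowmax n (amax Ap Am) i x = ereal r" and ord: "preserves_order n (amax Ap Am) i x y"
    and feas: "rowmax n Am i y \<le> rowmax n Ap i y"
  obtains j where "j \<in> active n (amax Ap Am) Ap i x"
    and "\<forall>j'\<in>active n (amax Ap Am) (amax Ap Am) i x. y j' - x j' \<le> y j - x j"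
proof -
  let ?T = "active n (amax Ap Am) (amax Ap Am) i x"
  define d where "d j = y j - x j" for j
  define \<mu> where "\<mu> = Max (d ` ?T)"
  have "Max (d ` ?T) \<in> d ` ?T" using active_nonempty[OF r] by simp
  then obtain js where js: "js \<in> ?T" "d js = \<mu>" unfolding \<mu>_def by (metis imageE)
  have AM_js: "amax Ap Am i js + ereal (y js) = ereal (r + \<mu>)"
    using active_shift[OF js(1) r] js(2) unfolding d_def by simp
  have ry: "rowmax n Ap i y = ereal (r + \<mu>)"
    using rowmax_perturb[OF r ord] feas rowmax_amax[of n Ap Am i y] unfolding \<mu>_def d_def by simp
  then have "0 < n" by (cases n) (auto simp: rowmax_def bot_ereal_def)
  then obtain j1 where j1: "j1 < n" "Ap i j1 + ereal (y j1) = ereal (r + \<mu>)"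
    using ry by (metis rowmax_attained)
  have AM_j1: "amax Ap Am i j1 + ereal (y j1) = ereal (r + \<mu>)"
    using j1 rowmax_upper[OF j1(1), of "amax Ap Am" i y] rowmax_perturb[OF r ord]
    unfolding \<mu>_def d_def by (auto simp: amax_def max_plus_ereal)
  have "j1 \<in> ?T"
  proof (rule ccontr)
    assume "j1 \<notin> ?T"
    then have "amax Ap Am i j1 + ereal (x j1) < amax Ap Am i js + ereal (x js)"
      using js(1) j1(1) rowmax_upper[OF j1(1), of "amax Ap Am" i x] r
      unfolding active_def by (auto simp: order.order_iff_strict)
    then have "amax Ap Am i j1 + ereal (y j1) < amax Ap Am i js + ereal (y js)"
      using ord j1(1) js(1) unfolding preserves_order_def active_def by blast
    then show False using AM_j1 AM_js by simp
  qed
  then have "amax Ap Am i j1 + ereal (x j1) = ereal r" using r unfolding active_def by simp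
  then have "d j1 = \<mu>" and "Ap i j1 + ereal (x j1) = ereal r"
    using AM_j1 j1(2) unfolding d_def by (cases "amax Ap Am i j1"; cases "Ap i j1"; simp)+
  then show thesis
    using that[of j1] j1(1) r unfolding active_def \<mu>_def d_def by auto
qed

lemma preserves_order_if_gap:
  assumes fin: "\<forall>j<n. M i j \<noteq> \<infinity>"
    and gap: "\<And>j1 j2 a1 a2. j1 < n \<Longrightarrow> j2 < n \<Longrightarrow> M i j1 = ereal a1 \<Longrightarrow> M i j2 = ereal a2 \<Longrightarrow>
      a1 + x j1 < a2 + x j2 \<Longrightarrow> (y j1 - x j1) - (y j2 - x j2) < (a2 + x j2) - (a1 + x j1)"
  shows "preserves_order n M i x y"
  unfolding preserves_order_def
proof (intro allI impI)
  fix j1 j2 assume j: "j1 < n" "j2 < n" and lt: "M i j1 + ereal (x j1) < M i j2 + ereal (x j2)"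
  then obtain a2 where a2: "M i j2 = ereal a2" using fin by (cases "M i j2") auto
  show "M i j1 + ereal (y j1) < M i j2 + ereal (y j2)"
  proof (cases "M i j1")
    case (real a1)
    then show ?thesis using gap[OF j real a2] lt a2 by simp
  qed (use fin j a2 in auto)
qed

section \<open>Superlevel sets of a weighted maximum\<close>

lemma sum_mult_add_if:
  fixes a f :: "'a \<Rightarrow> real"
  assumes "finite P"
  shows "(\<Sum>k\<in>P. a k * (f k + (if c k then h else 0))) = (\<Sum>k\<in>P. a k * f k) + h * (\<Sum>k | k \<in> P \<and> c k. a k)"
proof -
  have "(\<Sum>k\<in>P. a k * (f k + (if c k then h else 0))) = (\<Sum>k\<in>P. a k * f k) + (\<Sum>k\<in>P. if c k then h * a k else 0)"
    by (auto simp: sum.distrib[symmetric] algebra_simps intro!: sum.cong)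
  also have "(\<Sum>k\<in>P. if c k then h * a k else 0) = h * (\<Sum>k | k \<in> P \<and> c k. a k)"
    using assms by (simp add: sum.inter_filter[symmetric] sum_distrib_left)
  finally show ?thesis .
qed

lemma weighted_max_truncate_top:
  fixes d b :: "'j \<Rightarrow> real" and a :: "'k \<Rightarrow> real"
  assumes N: "finite N" and P: "finite P" and S: "\<And>k. k \<in> P \<Longrightarrow> S k \<subseteq> N \<and> S k \<noteq> {}"
    and levels: "\<And>j. j \<in> N \<Longrightarrow> d j = t \<or> d j \<le> t'" and "t' < t"
  defines "d' \<equiv> \<lambda>j. min (d j) t'"
  shows "(\<Sum>k\<in>P. a k * Max (d ` S k)) - (\<Sum>j\<in>N. b j * d j) =
      (\<Sum>k\<in>P. a k * Max (d' ` S k)) - (\<Sum>j\<in>N. b j * d' j)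
      + (t - t') * ((\<Sum>k | k \<in> P \<and> (\<exists>j\<in>S k. t \<le> d j). a k) - (\<Sum>j | j \<in> N \<and> t \<le> d j. b j))"
proof -
  have split: "v = min v t' + (if t \<le> v then t - t' else 0)" if v: "v \<in> d ` N" for v
  proof -
    obtain j where "j \<in> N" "v = d j" using v by blast
    then show ?thesis using levels[of j] \<open>t' < t\<close> by auto
  qed
  have "Max (d ` S k) = Max (d' ` S k) + (if \<exists>j\<in>S k. t \<le> d j then t - t' else 0)"
    if k: "k \<in> P" for k
  proof -
    have fin: "finite (S k)" "S k \<noteq> {}" using S[OF k] N finite_subset by auto
    have "Max (d' ` S k) = min (Max (d ` S k)) t'"
      unfolding d'_def image_image[symmetric, of "\<lambda>v. min v t'" d]
      by (rule mono_Max_commute[symmetric]) (use fin in \<open>auto simp: mono_def\<close>)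
    moreover have "Max (d ` S k) \<in> d ` N"
      using Max_in[of "d ` S k"] fin S[OF k] by blast
    moreover have "t \<le> Max (d ` S k) \<longleftrightarrow> (\<exists>j\<in>S k. t \<le> d j)"
      using fin by (simp add: Max_ge_iff)
    ultimately show ?thesis using split[of "Max (d ` S k)"] by simp
  qed
  then have "(\<Sum>k\<in>P. a k * Max (d ` S k)) =
      (\<Sum>k\<in>P. a k * Max (d' ` S k)) + (t - t') * (\<Sum>k | k \<in> P \<and> (\<exists>j\<in>S k. t \<le> d j). a k)"
    using P by (simp add: sum_mult_add_if)
  moreover have "(\<Sum>j\<in>N. b j * d j) = (\<Sum>j\<in>N. b j * d' j) + (t - t') * (\<Sum>j | j \<in> N \<and> t \<le> d j. b j)"
  proof -
    have "(\<Sum>j\<in>N. b j * d j) = (\<Sum>j\<in>N. b j * (d' j + (if t \<le> d j then t - t' else 0)))"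
      using split unfolding d'_def by (intro sum.cong) auto
    also have "\<dots> = (\<Sum>j\<in>N. b j * d' j) + (t - t') * (\<Sum>j | j \<in> N \<and> t \<le> d j. b j)"
      by (rule sum_mult_add_if[OF N])
    finally show ?thesis .
  qed
  ultimately show ?thesis unfolding right_diff_distrib by linarith
qed

(* If the top superlevel set has no deficit, truncating d at its second largest value keeps the
   hypothesis and takes fewer values. *)
lemma superlevel_set_deficit:
  fixes d b :: "'j \<Rightarrow> real" and a :: "'k \<Rightarrow> real"
  assumes N: "finite N" and P: "finite P" and S: "\<And>k. k \<in> P \<Longrightarrow> S k \<subseteq> N \<and> S k \<noteq> {}"
    and balanced: "(\<Sum>k\<in>P. a k) = (\<Sum>j\<in>N. b j)"
    and "(\<Sum>k\<in>P. a k * Max (d ` S k)) < (\<Sum>j\<in>N. b j * d j)"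
  shows "\<exists>t. (\<Sum>k | k \<in> P \<and> (\<exists>j\<in>S k. t \<le> d j). a k) < (\<Sum>j | j \<in> N \<and> t \<le> d j. b j)"
  using assms(5)
proof (induction "card (d ` N)" arbitrary: d rule: less_induct)
  case less
  have "N \<noteq> {}"
    using less.prems S by (cases "P = {}") auto
  define t where "t = Max (d ` N)"
  have t_in: "t \<in> d ` N" and t_ge: "\<And>j. j \<in> N \<Longrightarrow> d j \<le> t"
    using N \<open>N \<noteq> {}\<close> unfolding t_def by auto
  show ?case
  proof (cases "(\<Sum>k | k \<in> P \<and> (\<exists>j\<in>S k. t \<le> d j). a k) < (\<Sum>j | j \<in> N \<and> t \<le> d j. b j)")
    case True
    then show ?thesis by blast
  next
    case no_deficit: False
    have "d ` N \<noteq> {t}"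
    proof
      assume const: "d ` N = {t}"
      then have "d ` S k = {t}" if "k \<in> P" for k
        using S[OF that] by (metis image_is_empty image_mono subset_singletonD)
      then have "(\<Sum>k\<in>P. a k * Max (d ` S k)) = (\<Sum>k\<in>P. a k) * t"
        by (simp add: sum_distrib_right)
      moreover have "(\<Sum>j\<in>N. b j * d j) = (\<Sum>j\<in>N. b j) * t"
        unfolding sum_distrib_right using const by (intro sum.cong) auto
      ultimately show False using less.prems balanced by simp
    qed
    define t' where "t' = Max (d ` N - {t})"
    have "d ` N - {t} \<noteq> {}" using t_in \<open>d ` N \<noteq> {t}\<close> by blast
    then have t'_in: "t' \<in> d ` N - {t}"
      unfolding t'_def using N by (intro Max_in) auto
    have t'_ge: "d j \<le> t'" if "j \<in> N" "d j \<noteq> t" for j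
      unfolding t'_def using N that by (intro Max_ge) auto
    have "t' < t" using t'_in t_ge by force
    define d' where "d' j = min (d j) t'" for j
    have "d' ` N \<subset> d ` N"
      using t'_in t'_ge t_in \<open>t' < t\<close> unfolding d'_def by (force simp: min_def)
    then have card_less: "card (d' ` N) < card (d ` N)"
      using N by (simp add: psubset_card_mono)
    have "(\<Sum>k\<in>P. a k * Max (d ` S k)) - (\<Sum>j\<in>N. b j * d j) =
        (\<Sum>k\<in>P. a k * Max (d' ` S k)) - (\<Sum>j\<in>N. b j * d' j)
        + (t - t') * ((\<Sum>k | k \<in> P \<and> (\<exists>j\<in>S k. t \<le> d j). a k) - (\<Sum>j | j \<in> N \<and> t \<le> d j. b j))"
      unfolding d'_def by (rule weighted_max_truncate_top) (use N P S t'_ge \<open>t' < t\<close> in auto)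
    moreover have "0 \<le> (t - t') * ((\<Sum>k | k \<in> P \<and> (\<exists>j\<in>S k. t \<le> d j). a k) - (\<Sum>j | j \<in> N \<and> t \<le> d j. b j))"
      using no_deficit \<open>t' < t\<close> by simp
    ultimately have "(\<Sum>k\<in>P. a k * Max (d' ` S k)) < (\<Sum>j\<in>N. b j * d' j)"
      using less.prems by linarith
    then obtain t'' where t'': "(\<Sum>k | k \<in> P \<and> (\<exists>j\<in>S k. t'' \<le> d' j). a k) < (\<Sum>j | j \<in> N \<and> t'' \<le> d' j. b j)"
      using less.hyps[OF card_less] by blast
    have "t'' \<le> t'"
    proof (rule ccontr)
      assume "\<not> t'' \<le> t'"
      then have "\<not> t'' \<le> d' j" for j unfolding d'_def by simp
      then show False using t'' by simp
    qed
    then have "t'' \<le> d' j \<longleftrightarrow> t'' \<le> d j" for j unfolding d'_def by simp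
    then show ?thesis using t'' by auto
  qed
qed

section \<open>Cuts in the subgraphs of the extended tangent digraph\<close>

lemma cap_inner: "fst e \<noteq> Src \<Longrightarrow> snd e \<noteq> Snk \<Longrightarrow> cap mup mum D e = D"
  by (cases "(mup, mum, D, e)" rule: cap.cases) auto

lemma finite_Eext: "finite (Eext m n p Ap Am C x)"
proof -
  have "Eext m n p Ap Am C x \<subseteq> verts m n p \<times> verts m n p"
    unfolding Eext_def E1_def E2_def E3_def verts_def by auto
  then show ?thesis by (rule finite_subset) (simp add: verts_def)
qed

lemma finite_st_cuts: "finite (st_cuts m n p)"
  by (rule finite_subset[of _ "Pow (verts m n p)"]) (auto simp: st_cuts_def verts_def)

lemma subgraphs_tangent_edges:
  assumes "H \<in> subgraphs m n p Ap Am C x"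
  shows "E1 n p C x \<subseteq> H" "E2 m n Ap Am x \<subseteq> H"
    and "{(Src, Uv k) | k. k < p} \<subseteq> H" "{(Vv j, Snk) | j. j < n} \<subseteq> H"
  using assms unfolding subgraphs_def Eext_def E1_def E2_def E3_def by auto

lemma subgraphs_in_edge:
  assumes "H \<in> subgraphs m n p Ap Am C x" "i < m"
  obtains j where "j \<in> active n (amax Ap Am) Ap i x" "(Vv j, Wv i) \<in> H"
proof -
  have "card {v. (v, Wv i) \<in> H} = 1"
    using assms unfolding subgraphs_def by auto
  then obtain v where v: "{v. (v, Wv i) \<in> H} = {v}"
    by (rule card_1_singletonE)
  then have "(v, Wv i) \<in> Eext m n p Ap Am C x"
    using assms unfolding subgraphs_def by auto
  then obtain j where "v = Vv j" "j \<in> active n (amax Ap Am) Ap i x"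
    unfolding Eext_def E1_def E2_def E3_def active_def by auto
  then show thesis using that v by auto
qed

lemma subgraph_cut_cap:
  assumes H: "H \<in> subgraphs m n p Ap Am C x" and X: "X \<in> st_cuts m n p"
  shows "cut_cap mup mum D H X = sum mup {k. k < p \<and> Uv k \<notin> X} + sum mum {j. j < n \<and> Vv j \<in> X}
    + D * card {e \<in> H. fst e \<in> X \<and> snd e \<notin> X \<and> fst e \<noteq> Src \<and> snd e \<noteq> Snk}"
proof -
  define I where "I = {e \<in> H. fst e \<in> X \<and> snd e \<notin> X \<and> fst e \<noteq> Src \<and> snd e \<noteq> Snk}"
  define K where "K = {k. k < p \<and> Uv k \<notin> X}"
  define J where "J = {j. j < n \<and> Vv j \<in> X}"
  define src where "src = (\<lambda>k. (Src, Uv k)) ` K"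
  define snk where "snk = (\<lambda>j. (Vv j, Snk)) ` J"
  have "finite H"
    using H finite_Eext[of m n p Ap Am C x] unfolding subgraphs_def by (auto intro: finite_subset)
  have "{e \<in> H. fst e \<in> X \<and> snd e \<notin> X} = src \<union> snk \<union> I"
    using H X subgraphs_tangent_edges(3,4)[OF H]
    unfolding subgraphs_def st_cuts_def Eext_def E1_def E2_def E3_def I_def K_def J_def src_def snk_def
    by auto
  then have "cut_cap mup mum D H X = sum (cap mup mum D) (src \<union> snk) + sum (cap mup mum D) I"
    unfolding cut_cap_def using \<open>finite H\<close>
    by (simp, intro sum.union_disjoint) (auto simp: I_def src_def snk_def K_def J_def)
  also have "sum (cap mup mum D) (src \<union> snk) = sum (cap mup mum D) src + sum (cap mup mum D) snk"
    by (rule sum.union_disjoint) (auto simp: src_def snk_def K_def J_def)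
  also have "\<dots> = sum mup K + sum mum J"
    by (simp add: src_def snk_def sum.reindex inj_on_def)
  also have "sum (cap mup mum D) I = D * card I"
    by (simp add: cap_inner I_def)
  finally show ?thesis unfolding I_def K_def J_def .
qed

lemma closed_cut_cap:
  assumes H: "H \<in> subgraphs m n p Ap Am C x" and X: "X \<in> st_cuts m n p"
    and closed: "\<And>e. e \<in> H \<Longrightarrow> fst e \<in> X \<Longrightarrow> fst e \<noteq> Src \<Longrightarrow> snd e \<noteq> Snk \<Longrightarrow> snd e \<in> X"
  shows "cut_cap mup mum D H X = sum mup {k. k < p \<and> Uv k \<notin> X} + sum mum {j. j < n \<and> Vv j \<in> X}"
proof -
  have no_inner: "{e \<in> H. fst e \<in> X \<and> snd e \<notin> X \<and> fst e \<noteq> Src \<and> snd e \<noteq> Snk} = {}"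
    using closed by blast
  show ?thesis using subgraph_cut_cap[OF H X, of mup mum D, unfolded no_inner] by simp
qed

lemma min_cut_attained:
  obtains X where "X \<in> st_cuts m n p" "cut_cap mup mum D H X = min_cut m n p mup mum D H"
proof -
  have "{Src} \<in> st_cuts m n p" by (simp add: st_cuts_def verts_def)
  then have "min_cut m n p mup mum D H \<in> cut_cap mup mum D H ` st_cuts m n p"
    unfolding min_cut_def using finite_st_cuts by (intro Min_in) auto
  then show thesis using that by auto
qed

lemma min_cut_le:
  "X \<in> st_cuts m n p \<Longrightarrow> min_cut m n p mup mum D H \<le> cut_cap mup mum D H X"
  unfolding min_cut_def using finite_st_cuts by (intro Min_le) auto

lemma min_cut_le_total_supply:
  assumes "H \<in> subgraphs m n p Ap Am C x" and "(\<Sum>k<p. mup k) = D"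
  shows "min_cut m n p mup mum D H \<le> D"
proof -
  have X: "{Src} \<in> st_cuts m n p" by (simp add: st_cuts_def verts_def)
  have "cut_cap mup mum D H {Src} = D"
    using closed_cut_cap[OF assms(1) X, of mup mum D] assms(2) by (simp add: lessThan_def)
  then show ?thesis using min_cut_le[OF X] by metis
qed

lemma selected_subgraph:
  assumes sel: "\<And>i. i < m \<Longrightarrow> sel i \<in> active n (amax Ap Am) Ap i x"
  shows "(Eext m n p Ap Am C x - E3 m n Ap Am x) \<union> {(Vv (sel i), Wv i) | i. i < m} \<in> subgraphs m n p Ap Am C x"
proof -
  have "{(Vv (sel i), Wv i) | i. i < m} \<subseteq> E3 m n Ap Am x"
    using sel unfolding E3_def active_def by auto
  moreover have "{v. (v, Wv i) \<in> (Eext m n p Ap Am C x - E3 m n Ap Am x) \<union> {(Vv (sel i), Wv i) | i. i < m}}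
      = {Vv (sel i)}" if "i < m" for i
    using that unfolding Eext_def E1_def E2_def by auto
  ultimately show ?thesis
    unfolding subgraphs_def Eext_def by auto
qed

lemma small_cut:
  assumes H: "H \<in> subgraphs m n p Ap Am C x" and X: "X \<in> st_cuts m n p"
    and small: "cut_cap mup mum D H X < D"
  shows small_cut_closed: "\<And>e. e \<in> H \<Longrightarrow> fst e \<in> X \<Longrightarrow> fst e \<noteq> Src \<Longrightarrow> snd e \<noteq> Snk \<Longrightarrow> snd e \<in> X"
    and small_cut_terminal: "sum mup {k. k < p \<and> Uv k \<notin> X} + sum mum {j. j < n \<and> Vv j \<in> X} < D"
proof -
  define I where "I = {e \<in> H. fst e \<in> X \<and> snd e \<notin> X \<and> fst e \<noteq> Src \<and> snd e \<noteq> Snk}"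
  have cut: "cut_cap mup mum D H X = sum mup {k. k < p \<and> Uv k \<notin> X} + sum mum {j. j < n \<and> Vv j \<in> X} + D * card I"
    using subgraph_cut_cap[OF H X] unfolding I_def .
  then show "sum mup {k. k < p \<and> Uv k \<notin> X} + sum mum {j. j < n \<and> Vv j \<in> X} < D"
    using small by linarith
  have "finite I"
    using H finite_Eext[of m n p Ap Am C x] unfolding subgraphs_def I_def by (auto intro: finite_subset)
  moreover have "card I = 0"
    using cut small by (cases "card I") auto
  ultimately have "I = {}" by simp
  then show "snd e \<in> X" if "e \<in> H" "fst e \<in> X" "fst e \<noteq> Src" "snd e \<noteq> Snk" for e
    using that unfolding I_def by blast
qed

section \<open>Local analysis at a feasible point\<close>

locale tropical_program =
  fixes m n p D :: nat
    and Ap Am C :: "nat \<Rightarrow> nat \<Rightarrow> ereal"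
    and mup mum :: "nat \<Rightarrow> nat"
    and x :: "nat \<Rightarrow> real"
  assumes entries_Rmax: "\<forall>i<m. \<forall>j<n. Ap i j \<noteq> \<infinity> \<and> Am i j \<noteq> \<infinity>"
    and entries_Rmax_C: "\<forall>k<p. \<forall>j<n. C k j \<noteq> \<infinity>"
    and rowsA: "\<forall>i<m. \<exists>j<n. amax Ap Am i j \<noteq> -\<infinity>"
    and rowsC: "\<forall>k<p. \<exists>j<n. C k j \<noteq> -\<infinity>"
    and sum_plus: "(\<Sum>k<p. mup k) = D"
    and sum_minus: "(\<Sum>j<n. mum j) = D"
    and feas: "feasible m n Ap Am x"
begin

abbreviation "AM \<equiv> amax Ap Am"

lemma AM_finite: "i < m \<Longrightarrow> \<forall>j<n. AM i j \<noteq> \<infinity>"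
  using entries_Rmax by (auto simp: amax_def max_def)

lemma rowmax_AM_finite:
  assumes "i < m" obtains r where "rowmax n AM i z = ereal r"
  using rowmax_finite AM_finite[OF assms] rowsA assms by metis

lemma rowmax_C_finite:
  assumes "k < p" obtains r where "rowmax n C k z = ereal r"
  using rowmax_finite entries_Rmax_C rowsC assms by metis

lemma eps_pos: "0 < eps m n p Ap Am C x"
proof -
  define G where "G = {ereal \<bar>(real_of_ereal (AM i j1) + x j1) - (real_of_ereal (AM i j2) + x j2)\<bar> | i j1 j2.
         i < m \<and> j1 < n \<and> j2 < n \<and> AM i j1 \<noteq> -\<infinity> \<and> AM i j2 \<noteq> -\<infinity>} \<union>
      {ereal \<bar>(real_of_ereal (C k j1) + x j1) - (real_of_ereal (C k j2) + x j2)\<bar> | k j1 j2.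
         k < p \<and> j1 < n \<and> j2 < n \<and> C k j1 \<noteq> -\<infinity> \<and> C k j2 \<noteq> -\<infinity>}"
  have "G \<subseteq> (\<lambda>(i, j1, j2). ereal \<bar>(real_of_ereal (AM i j1) + x j1) - (real_of_ereal (AM i j2) + x j2)\<bar>)
        ` ({..<m} \<times> {..<n} \<times> {..<n})
      \<union> (\<lambda>(k, j1, j2). ereal \<bar>(real_of_ereal (C k j1) + x j1) - (real_of_ereal (C k j2) + x j2)\<bar>)
        ` ({..<p} \<times> {..<n} \<times> {..<n})"
    unfolding G_def by force
  then have fin: "finite ({e. 0 < e} \<inter> G)"
    by (meson finite_Int finite_SigmaI finite_UnI finite_imageI finite_lessThan finite_subset)
  have "Inf ({e. 0 < e} \<inter> G) \<in> {e. 0 < e} \<inter> G" if "{e. 0 < e} \<inter> G \<noteq> {}"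
    using fin that by (rule finite_Inf_in) (auto simp: inf_min min_def)
  then show ?thesis
    unfolding eps_def G_def[symmetric] by (cases "{e. 0 < e} \<inter> G = {}") (auto simp: top_ereal_def)
qed

lemma eps_le_gap_AM:
  assumes "i < m" "j1 < n" "j2 < n" "AM i j1 = ereal a1" "AM i j2 = ereal a2" "a1 + x j1 < a2 + x j2"
  shows "eps m n p Ap Am C x \<le> ereal ((a2 + x j2) - (a1 + x j1))"
proof -
  have "ereal ((a2 + x j2) - (a1 + x j1)) =
      ereal \<bar>(real_of_ereal (AM i j1) + x j1) - (real_of_ereal (AM i j2) + x j2)\<bar>"
    using assms by simp
  then show ?thesis
    unfolding eps_def using assms
    by (intro Inf_lower IntI UnI1 CollectI exI[of _ i] exI[of _ j1] exI[of _ j2]) auto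
qed

lemma eps_le_gap_C:
  assumes "k < p" "j1 < n" "j2 < n" "C k j1 = ereal a1" "C k j2 = ereal a2" "a1 + x j1 < a2 + x j2"
  shows "eps m n p Ap Am C x \<le> ereal ((a2 + x j2) - (a1 + x j1))"
proof -
  have "ereal ((a2 + x j2) - (a1 + x j1)) =
      ereal \<bar>(real_of_ereal (C k j1) + x j1) - (real_of_ereal (C k j2) + x j2)\<bar>"
    using assms by simp
  then show ?thesis
    unfolding eps_def using assms
    by (intro Inf_lower IntI UnI2 CollectI exI[of _ k] exI[of _ j1] exI[of _ j2]) auto
qed

(* epsilon(x) is the least positive gap between two entries of a row at x, so a perturbation whose
   spread stays below it cannot reorder them. *)
lemma small_perturbation_preserves_order:
  assumes small: "\<forall>j1<n. \<forall>j2<n. ereal ((y j1 - x j1) - (y j2 - x j2)) < eps m n p Ap Am C x"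
  shows "i < m \<Longrightarrow> preserves_order n AM i x y" and "k < p \<Longrightarrow> preserves_order n C k x y"
proof -
  have below_gap: "(y j1 - x j1) - (y j2 - x j2) < g"
    if "j1 < n" "j2 < n" "eps m n p Ap Am C x \<le> ereal g" for j1 j2 g
  proof -
    have "ereal ((y j1 - x j1) - (y j2 - x j2)) < eps m n p Ap Am C x" using small that(1,2) by blast
    then have "ereal ((y j1 - x j1) - (y j2 - x j2)) < ereal g" using that(3) by (rule order_less_le_trans)
    then show ?thesis by simp
  qed
  show "preserves_order n AM i x y" if i: "i < m"
  proof (rule preserves_order_if_gap)
    show "\<forall>j<n. AM i j \<noteq> \<infinity>" using AM_finite[OF i] .
    fix j1 j2 a1 a2
    assume j: "j1 < n" "j2 < n" and a: "AM i j1 = ereal a1" "AM i j2 = ereal a2" "a1 + x j1 < a2 + x j2"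
    show "(y j1 - x j1) - (y j2 - x j2) < (a2 + x j2) - (a1 + x j1)"
      by (rule below_gap[OF j eps_le_gap_AM[OF i j a]])
  qed
  show "preserves_order n C k x y" if k: "k < p"
  proof (rule preserves_order_if_gap)
    show "\<forall>j<n. C k j \<noteq> \<infinity>" using entries_Rmax_C k by blast
    fix j1 j2 a1 a2
    assume j: "j1 < n" "j2 < n" and a: "C k j1 = ereal a1" "C k j2 = ereal a2" "a1 + x j1 < a2 + x j2"
    show "(y j1 - x j1) - (y j2 - x j2) < (a2 + x j2) - (a1 + x j1)"
      by (rule below_gap[OF j eps_le_gap_C[OF k j a]])
  qed
qed

lemma fobj_diff:
  assumes "\<forall>k<p. preserves_order n C k x y"
  shows "fobj p n C mup mum y - fobj p n C mup mum x =
    (\<Sum>k<p. real (mup k) * Max ((\<lambda>j. y j - x j) ` active n C C k x)) - (\<Sum>j<n. real (mum j) * (y j - x j))"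
proof -
  have "real_of_ereal (rowmax n C k y) = real_of_ereal (rowmax n C k x) + Max ((\<lambda>j. y j - x j) ` active n C C k x)"
    if k: "k < p" for k
  proof -
    obtain r where "rowmax n C k x = ereal r" using rowmax_C_finite[OF k] .
    then show ?thesis using rowmax_perturb assms k by simp
  qed
  then show ?thesis
    unfolding fobj_def by (simp add: algebra_simps sum.distrib sum_subtractf)
qed

lemma active_plus_nonempty:
  assumes "i < m" shows "active n AM Ap i x \<noteq> {}"
proof -
  obtain r where r: "rowmax n AM i x = ereal r" using rowmax_AM_finite[OF assms] .
  have "preserves_order n AM i x x" by (simp add: preserves_order_def)
  moreover have "rowmax n Am i x \<le> rowmax n Ap i x" using feas assms unfolding feasible_def by blast
  ultimately obtain j where "j \<in> active n AM Ap i x" by (rule max_shift_on_plus_if_row_feasible[OF r])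
  then show ?thesis by blast
qed

lemma indicator_shift_preserves_order:
  fixes J :: "nat set"
  assumes "0 < \<delta>" "ereal \<delta> < eps m n p Ap Am C x"
  defines "y \<equiv> \<lambda>j. x j + (if j < n \<and> j \<in> J then \<delta> else 0)"
  shows "i < m \<Longrightarrow> preserves_order n AM i x y" and "k < p \<Longrightarrow> preserves_order n C k x y"
proof -
  have "ereal ((y j1 - x j1) - (y j2 - x j2)) \<le> ereal \<delta>" for j1 j2
    using assms(1) unfolding y_def by simp
  then have "\<forall>j1<n. \<forall>j2<n. ereal ((y j1 - x j1) - (y j2 - x j2)) < eps m n p Ap Am C x"
    using assms(2) order_le_less_trans by blast
  then show "i < m \<Longrightarrow> preserves_order n AM i x y" and "k < p \<Longrightarrow> preserves_order n C k x y"
    by (simp_all add: small_perturbation_preserves_order)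
qed

lemma cut_descent_feasible:
  assumes H: "H \<in> subgraphs m n p Ap Am C x" and X: "X \<in> st_cuts m n p"
    and small: "cut_cap mup mum D H X < D" and \<delta>: "0 < \<delta>" "ereal \<delta> < eps m n p Ap Am C x"
  defines "y \<equiv> \<lambda>j. x j + (if j < n \<and> Vv j \<notin> X then \<delta> else 0)"
  shows "feasible m n Ap Am y"
  unfolding feasible_def
proof (intro allI impI)
  fix i assume i: "i < m"
  define d where "d j = y j - x j" for j
  have d_le: "d j \<le> \<delta>" for j using \<delta>(1) unfolding d_def y_def by simp
  obtain r where r: "rowmax n AM i x = ereal r" using rowmax_AM_finite[OF i] .
  have ord: "preserves_order n AM i x y"
    using indicator_shift_preserves_order(1)[OF \<delta> i, of "{j. Vv j \<notin> X}"] unfolding y_def by simp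
  show "rowmax n Am i y \<le> rowmax n Ap i y"
  proof (cases "\<exists>j\<in>active n AM Ap i x. Vv j \<notin> X")
    case True
    then obtain j where j: "j \<in> active n AM Ap i x" "Vv j \<notin> X" by blast
    then have "d j = \<delta>" unfolding d_def y_def active_def by simp
    then show ?thesis
      using row_feasible_if_max_shift_on_plus[OF r ord j(1)] d_le unfolding d_def by metis
  next
    case False
    obtain ji where ji: "ji \<in> active n AM Ap i x" "(Vv ji, Wv i) \<in> H"
      using subgraphs_in_edge[OF H i] .
    have "Wv i \<in> X" using small_cut_closed[OF H X small ji(2)] ji(1) False by simp
    then have "Vv j' \<in> X" if "j' \<in> active n AM Am i x" for j'
      using small_cut_closed[OF H X small, of "(Wv i, Vv j')"] subgraphs_tangent_edges(2)[OF H] that i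
      unfolding E2_def active_def by auto
    then have "Vv j' \<in> X" if "j' \<in> active n AM AM i x" for j'
      using that False active_amax[of n Ap Am i x] by blast
    then have "d j' = d ji" if "j' \<in> active n AM AM i x" for j'
      using that ji(1) False unfolding d_def y_def by simp
    then show ?thesis
      using row_feasible_if_max_shift_on_plus[OF r ord ji(1)] unfolding d_def by simp
  qed
qed

lemma indicator_shift_fobj_le:
  assumes \<delta>: "0 < \<delta>" "ereal \<delta> < eps m n p Ap Am C x" and J: "J \<subseteq> {..<n}"
    and K: "K \<subseteq> {..<p}" "\<And>k. k < p \<Longrightarrow> active n C C k x \<inter> J \<noteq> {} \<Longrightarrow> k \<in> K"
  defines "y \<equiv> \<lambda>j. x j + (if j < n \<and> j \<in> J then \<delta> else 0)"
  shows "fobj p n C mup mum y - fobj p n C mup mum x \<le> \<delta> * (real (sum mup K) - real (sum mum J))"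
proof -
  define d where "d j = y j - x j" for j
  have d: "d j = (if j \<in> J then \<delta> else 0)" for j using J unfolding d_def y_def by auto
  have Max_le: "Max (d ` active n C C k x) \<le> (if k \<in> K then \<delta> else 0)" if k: "k < p" for k
  proof -
    obtain r where "rowmax n C k x = ereal r" using rowmax_C_finite[OF k] .
    then have "active n C C k x \<noteq> {}" by (rule active_nonempty)
    moreover have "d j \<le> (if k \<in> K then \<delta> else 0)" if "j \<in> active n C C k x" for j
      using that K(2)[OF k] \<delta>(1) by (auto simp: d)
    ultimately show ?thesis by (simp add: Max_le_iff)
  qed
  have "(\<Sum>k<p. real (mup k) * Max (d ` active n C C k x)) \<le> (\<Sum>k<p. real (mup k) * (if k \<in> K then \<delta> else 0))"
    using Max_le by (intro sum_mono mult_left_mono) auto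
  also have "\<dots> = (\<Sum>k<p. if k \<in> K then \<delta> * real (mup k) else 0)"
    by (intro sum.cong) auto
  also have "\<dots> = \<delta> * real (sum mup K)"
    using sum.inter_restrict[of "{..<p}" "\<lambda>k. \<delta> * real (mup k)" K] K(1)
    by (simp add: sum_distrib_left Int_absorb1)
  finally have "(\<Sum>k<p. real (mup k) * Max (d ` active n C C k x)) \<le> \<delta> * real (sum mup K)" .
  moreover have "(\<Sum>j<n. real (mum j) * d j) = \<delta> * real (sum mum J)"
    using sum.inter_restrict[of "{..<n}" "\<lambda>j. \<delta> * real (mum j)" J] J
    by (simp add: d sum_distrib_left Int_absorb1 if_distrib mult.commute cong: if_cong)
  moreover have "\<forall>k<p. preserves_order n C k x y"
    using indicator_shift_preserves_order(2)[OF \<delta>] unfolding y_def by blast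
  ultimately show ?thesis
    using fobj_diff unfolding d_def by (simp add: right_diff_distrib)
qed

lemma cut_descent_decreases:
  assumes H: "H \<in> subgraphs m n p Ap Am C x" and X: "X \<in> st_cuts m n p"
    and small: "cut_cap mup mum D H X < D" and \<delta>: "0 < \<delta>" "ereal \<delta> < eps m n p Ap Am C x"
  defines "y \<equiv> \<lambda>j. x j + (if j < n \<and> Vv j \<notin> X then \<delta> else 0)"
  shows "fobj p n C mup mum y < fobj p n C mup mum x"
proof -
  define J where "J = {j. j < n \<and> Vv j \<notin> X}"
  define JX where "JX = {j. j < n \<and> Vv j \<in> X}"
  define K where "K = {k. k < p \<and> Uv k \<notin> X}"
  have "k \<in> K" if "k < p" "active n C C k x \<inter> J \<noteq> {}" for k
    using that small_cut_closed[OF H X small] subgraphs_tangent_edges(1)[OF H]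
    unfolding J_def K_def E1_def active_def by fastforce
  then have "fobj p n C mup mum y - fobj p n C mup mum x \<le> \<delta> * (real (sum mup K) - real (sum mum J))"
    using indicator_shift_fobj_le[OF \<delta>, of J K] unfolding y_def J_def K_def by auto
  moreover have "{..<n} = J \<union> JX" "J \<inter> JX = {}" unfolding J_def JX_def by auto
  then have "sum mum {..<n} = sum mum J + sum mum JX"
    by (simp add: sum.union_disjoint J_def JX_def)
  then have "sum mup K < sum mum J"
    using small_cut_terminal[OF H X small] sum_minus unfolding K_def JX_def by linarith
  then have "real (sum mup K) - real (sum mum J) < 0" by linarith
  then have "\<delta> * (real (sum mup K) - real (sum mum J)) < 0"
    using \<delta>(1) mult_pos_neg by blast
  ultimately show ?thesis by linarith
qed

lemma subgraph_with_small_cut: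
  assumes J: "J \<subseteq> {..<n}"
    and closed: "\<And>i. i < m \<Longrightarrow> active n AM Am i x \<inter> J \<noteq> {} \<Longrightarrow> active n AM Ap i x \<inter> J \<noteq> {}"
    and deficit: "sum mup {k. k < p \<and> active n C C k x \<inter> J \<noteq> {}} < sum mum J"
  obtains H X where "H \<in> subgraphs m n p Ap Am C x" "X \<in> st_cuts m n p" "cut_cap mup mum D H X < D"
proof -
  let ?A = "\<lambda>i. active n AM Ap i x" and ?S = "\<lambda>k. active n C C k x"
  have "\<forall>i. \<exists>j. i < m \<longrightarrow> j \<in> ?A i \<and> (?A i \<inter> J \<noteq> {} \<longrightarrow> j \<in> J)"
    using active_plus_nonempty by blast
  then obtain sel where sel: "\<And>i. i < m \<Longrightarrow> sel i \<in> ?A i \<and> (?A i \<inter> J \<noteq> {} \<longrightarrow> sel i \<in> J)"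
    by metis
  define H where "H = (Eext m n p Ap Am C x - E3 m n Ap Am x) \<union> {(Vv (sel i), Wv i) | i. i < m}"
  define X where "X = {Src} \<union> Uv ` {k. k < p \<and> ?S k \<inter> J = {}} \<union> Vv ` ({..<n} - J)
      \<union> Wv ` {i. i < m \<and> ?A i \<inter> J = {}}"
  have H: "H \<in> subgraphs m n p Ap Am C x"
    unfolding H_def using sel by (intro selected_subgraph) blast
  have X: "X \<in> st_cuts m n p"
    unfolding X_def st_cuts_def verts_def by auto
  have closed_X: "snd e \<in> X" if "e \<in> H" "fst e \<in> X" "fst e \<noteq> Src" "snd e \<noteq> Snk" for e
  proof -
    have "e \<in> E1 n p C x \<or> e \<in> E2 m n Ap Am x \<or> e \<in> {(Vv (sel i), Wv i) | i. i < m}"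
      using that unfolding H_def Eext_def by auto
    then show ?thesis
    proof (elim disjE)
      assume "e \<in> E1 n p C x"
      then obtain k j where e: "e = (Uv k, Vv j)" "k < p" "j \<in> ?S k"
        unfolding E1_def active_def by auto
      then have "?S k \<inter> J = {}" using that(2) unfolding X_def by auto
      then show ?thesis using e unfolding X_def active_def by auto
    next
      assume "e \<in> E2 m n Ap Am x"
      then show ?thesis using that(2) closed unfolding E2_def X_def active_def by fastforce
    next
      assume "e \<in> {(Vv (sel i), Wv i) | i. i < m}"
      then show ?thesis using that(2) sel unfolding X_def by fastforce
    qed
  qed
  have "{k. k < p \<and> Uv k \<notin> X} = {k. k < p \<and> ?S k \<inter> J \<noteq> {}}"
    and "{j. j < n \<and> Vv j \<in> X} = {..<n} - J"
    unfolding X_def by auto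
  then have "cut_cap mup mum D H X = sum mup {k. k < p \<and> ?S k \<inter> J \<noteq> {}} + sum mum ({..<n} - J)"
    using closed_cut_cap[OF H X closed_X, of mup mum D] by simp
  moreover have "sum mum ({..<n} - J) + sum mum J = D"
    using sum.subset_diff[OF J, of mum] sum_minus by simp
  ultimately show thesis using that H X deficit by simp
qed

lemma improving_perturbation_if_not_local_opt:
  assumes "\<not> local_opt m n p Ap Am C mup mum x"
  obtains y where "feasible m n Ap Am y" "fobj p n C mup mum y < fobj p n C mup mum x"
    and "\<forall>i<m. preserves_order n AM i x y" and "\<forall>k<p. preserves_order n C k x y"
proof -
  obtain z where z: "0 < ereal z" "ereal z < eps m n p Ap Am C x"
    using ereal_dense2[OF eps_pos] by blast
  have "\<forall>\<delta>>0. \<exists>y. feasible m n Ap Am y \<and> (\<forall>j<n. \<bar>x j - y j\<bar> < \<delta>) \<and>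
      fobj p n C mup mum y < fobj p n C mup mum x"
    using assms feas unfolding local_opt_def by (auto simp: not_le)
  moreover have "0 < z / 2" using z(1) by simp
  ultimately obtain y where y: "feasible m n Ap Am y" "\<forall>j<n. \<bar>x j - y j\<bar> < z / 2"
      "fobj p n C mup mum y < fobj p n C mup mum x"
    by blast
  have "\<forall>j1<n. \<forall>j2<n. ereal ((y j1 - x j1) - (y j2 - x j2)) < eps m n p Ap Am C x"
  proof (intro allI impI)
    fix j1 j2 assume "j1 < n" "j2 < n"
    then have "\<bar>x j1 - y j1\<bar> < z / 2" "\<bar>x j2 - y j2\<bar> < z / 2" using y(2) by blast+
    then have "(y j1 - x j1) - (y j2 - x j2) < z" by linarith
    then have "ereal ((y j1 - x j1) - (y j2 - x j2)) < ereal z" by simp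
    then show "ereal ((y j1 - x j1) - (y j2 - x j2)) < eps m n p Ap Am C x" using z(2) by (rule order_less_trans)
  qed
  then show thesis using that y(1,3) small_perturbation_preserves_order by blast
qed

lemma small_cut_if_feasible_descent:
  assumes y: "feasible m n Ap Am y" "fobj p n C mup mum y < fobj p n C mup mum x"
    and ordA: "\<forall>i<m. preserves_order n AM i x y" and ordC: "\<forall>k<p. preserves_order n C k x y"
  obtains H X where "H \<in> subgraphs m n p Ap Am C x" "X \<in> st_cuts m n p" "cut_cap mup mum D H X < D"
proof -
  define d where "d j = y j - x j" for j
  let ?A = "\<lambda>i. active n AM Ap i x" and ?B = "\<lambda>i. active n AM Am i x" and ?S = "\<lambda>k. active n C C k x"
  have dominated: "\<exists>j'\<in>?A i. d j \<le> d j'" if i: "i < m" and j: "j \<in> ?B i" for i j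
  proof -
    obtain r where r: "rowmax n AM i x = ereal r" using rowmax_AM_finite[OF i] .
    have "rowmax n Am i y \<le> rowmax n Ap i y" using y(1) i unfolding feasible_def by blast
    then obtain j' where "j' \<in> ?A i" "\<forall>j''\<in>active n AM AM i x. y j'' - x j'' \<le> y j' - x j'"
      using max_shift_on_plus_if_row_feasible[OF r] ordA i by blast
    then show ?thesis using j active_amax[of n Ap Am i x] unfolding d_def by blast
  qed
  have S: "?S k \<subseteq> {..<n} \<and> ?S k \<noteq> {}" if k: "k \<in> {..<p}" for k
  proof -
    obtain r where "rowmax n C k x = ereal r" using rowmax_C_finite k by blast
    then show ?thesis using active_nonempty unfolding active_def by blast
  qed
  have "(\<Sum>k\<in>{..<p}. real (mup k)) = (\<Sum>j\<in>{..<n}. real (mum j))"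
    using sum_plus sum_minus by (simp flip: of_nat_sum)
  moreover have "(\<Sum>k\<in>{..<p}. real (mup k) * Max (d ` ?S k)) < (\<Sum>j\<in>{..<n}. real (mum j) * d j)"
    using fobj_diff[OF ordC] y(2) unfolding d_def by simp
  ultimately obtain t where t: "(\<Sum>k | k \<in> {..<p} \<and> (\<exists>j\<in>?S k. t \<le> d j). real (mup k))
      < (\<Sum>j | j \<in> {..<n} \<and> t \<le> d j. real (mum j))"
    using superlevel_set_deficit[of "{..<n}" "{..<p}" ?S] S by blast
  define J where "J = {j. j < n \<and> t \<le> d j}"
  have "{k. k < p \<and> ?S k \<inter> J \<noteq> {}} = {k. k \<in> {..<p} \<and> (\<exists>j\<in>?S k. t \<le> d j)}"
    using S unfolding J_def by blast
  then have "sum mup {k. k < p \<and> ?S k \<inter> J \<noteq> {}} < sum mum J"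
    using t unfolding J_def by (simp flip: of_nat_sum)
  moreover have "?A i \<inter> J \<noteq> {}" if "i < m" "?B i \<inter> J \<noteq> {}" for i
    using that dominated unfolding J_def active_def by fastforce
  moreover have "J \<subseteq> {..<n}" unfolding J_def by auto
  ultimately show thesis using subgraph_with_small_cut that by blast
qed

lemma small_min_cut_if_not_local_opt:
  assumes "\<not> local_opt m n p Ap Am C mup mum x"
  obtains H where "H \<in> subgraphs m n p Ap Am C x" "min_cut m n p mup mum D H < D"
proof -
  obtain y where "feasible m n Ap Am y" "fobj p n C mup mum y < fobj p n C mup mum x"
      "\<forall>i<m. preserves_order n AM i x y" "\<forall>k<p. preserves_order n C k x y"
    using improving_perturbation_if_not_local_opt[OF assms] .
  then obtain H X where "H \<in> subgraphs m n p Ap Am C x" "X \<in> st_cuts m n p" "cut_cap mup mum D H X < D"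
    by (rule small_cut_if_feasible_descent)
  then show thesis using that min_cut_le[of X m n p mup mum D H] by simp
qed

lemma local_opt_cut_cap_ge:
  assumes opt: "local_opt m n p Ap Am C mup mum x"
    and H: "H \<in> subgraphs m n p Ap Am C x" and X: "X \<in> st_cuts m n p"
  shows "D \<le> cut_cap mup mum D H X"
proof (rule ccontr)
  assume "\<not> D \<le> cut_cap mup mum D H X"
  then have small: "cut_cap mup mum D H X < D" by simp
  obtain \<rho> where \<rho>: "0 < \<rho>" and opt_ball: "\<And>y. feasible m n Ap Am y \<Longrightarrow> \<forall>j<n. \<bar>x j - y j\<bar> < \<rho> \<Longrightarrow>
      fobj p n C mup mum x \<le> fobj p n C mup mum y"
    using opt unfolding local_opt_def by blast
  obtain z where z: "0 < ereal z" "ereal z < eps m n p Ap Am C x"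
    using ereal_dense2[OF eps_pos] by blast
  define \<delta> where "\<delta> = min z (\<rho> / 2)"
  have \<delta>: "0 < \<delta>" "ereal \<delta> < eps m n p Ap Am C x"
    using z \<rho> unfolding \<delta>_def by (auto intro: le_less_trans[of _ "ereal z"])
  define y where "y = (\<lambda>j. x j + (if j < n \<and> Vv j \<notin> X then \<delta> else 0))"
  have "\<forall>j<n. \<bar>x j - y j\<bar> < \<rho>" using \<delta>(1) \<rho> unfolding y_def \<delta>_def by auto
  then have "fobj p n C mup mum x \<le> fobj p n C mup mum y"
    using opt_ball cut_descent_feasible[OF H X small \<delta>] unfolding y_def by blast
  then show False using cut_descent_decreases[OF H X small \<delta>] unfolding y_def by simp
qed

end

theorem theorem1p2:
  fixes m n p D :: nat
    and Ap Am C :: "nat \<Rightarrow> nat \<Rightarrow> ereal"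
    and mup mum :: "nat \<Rightarrow> nat"
    and x :: "nat \<Rightarrow> real"
  assumes entries_Rmax: "\<forall>i<m. \<forall>j<n. Ap i j \<noteq> \<infinity> \<and> Am i j \<noteq> \<infinity>"
    and entries_Rmax_C: "\<forall>k<p. \<forall>j<n. C k j \<noteq> \<infinity>"
    and rowsA: "\<forall>i<m. \<exists>j<n. amax Ap Am i j \<noteq> -\<infinity>"
    and rowsC: "\<forall>k<p. \<exists>j<n. C k j \<noteq> -\<infinity>"
    and sum_plus: "(\<Sum>k<p. mup k) = D"
    and sum_minus: "(\<Sum>j<n. mum j) = D"
    and conn: "graph_connected m n p Ap Am C"
    and feas: "feasible m n Ap Am x"
  shows "(local_opt m n p Ap Am C mup mum x \<longleftrightarrow>
            (\<forall>H\<in>subgraphs m n p Ap Am C x. min_cut m n p mup mum D H = D))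
       \<and> (\<not> local_opt m n p Ap Am C mup mum x \<longrightarrow>
            (\<exists>H\<in>subgraphs m n p Ap Am C x. \<exists>X\<in>st_cuts m n p.
               cut_cap mup mum D H X = min_cut m n p mup mum D H \<and> cut_cap mup mum D H X < D \<and>
               (\<forall>\<delta>::real. 0 < \<delta> \<and> ereal \<delta> < eps m n p Ap Am C x \<longrightarrow>
                  (let y = (\<lambda>j. x j + (if j < n \<and> Vv j \<notin> X then \<delta> else 0)) in
                     feasible m n Ap Am y \<and> fobj p n C mup mum y < fobj p n C mup mum x))))"
proof -
  interpret tropical_program m n p D Ap Am C mup mum x
    using entries_Rmax entries_Rmax_C rowsA rowsC sum_plus sum_minus feas by unfold_locales
  have opt_min_cut: "min_cut m n p mup mum D H = D"
    if "local_opt m n p Ap Am C mup mum x" "H \<in> subgraphs m n p Ap Am C x" for H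
    using min_cut_attained[of m n p mup mum D H] local_opt_cut_cap_ge[OF that]
      min_cut_le_total_supply[OF that(2) sum_plus] by (metis antisym)
  have descent: "\<exists>H\<in>subgraphs m n p Ap Am C x. \<exists>X\<in>st_cuts m n p.
      cut_cap mup mum D H X = min_cut m n p mup mum D H \<and> cut_cap mup mum D H X < D \<and>
      (\<forall>\<delta>::real. 0 < \<delta> \<and> ereal \<delta> < eps m n p Ap Am C x \<longrightarrow>
         (let y = (\<lambda>j. x j + (if j < n \<and> Vv j \<notin> X then \<delta> else 0)) in
            feasible m n Ap Am y \<and> fobj p n C mup mum y < fobj p n C mup mum x))"
    if not_opt: "\<not> local_opt m n p Ap Am C mup mum x"
  proof -
    obtain H where H: "H \<in> subgraphs m n p Ap Am C x" "min_cut m n p mup mum D H < D"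
      using small_min_cut_if_not_local_opt[OF not_opt] .
    obtain X where X: "X \<in> st_cuts m n p" "cut_cap mup mum D H X = min_cut m n p mup mum D H"
      using min_cut_attained .
    then have small: "cut_cap mup mum D H X < D" using H(2) by simp
    show ?thesis
      using H X small cut_descent_feasible[OF H(1) X(1) small] cut_descent_decreases[OF H(1) X(1) small]
      unfolding Let_def by blast
  qed
  show ?thesis using opt_min_cut descent by fastforce
qed

end
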